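(* Let $N\ge1$, $0<s<1$, and assume (V$_1$), ($f_1$)–($f_5$). Let $\tilde V$ be a second potential satisfying (V$_1$). If $V\ge\tilde V$ on $\mathbb{R}^N$, then $c(V)\ge c(\tilde V)$.
   Context: $\hat u$ denotes the Fourier transform. (V$_1$) for a potential $W$: $W\in C^1(\mathbb{R}^N)$ and $\inf W>0$. ($f_1$) $f\in C^1(\mathbb{R}^N\times\mathbb{R})$. ($f_2$) $f(x,0)=0=\partial_sf(x,0)$. ($f_3$) $|\partial_sf(x,s)|\le a_1+a_2|s|^{p-1}$ for constants $a_1,a_2>0$, $1<p<\frac{N+2s}{N-2s}$ (in particular $N>2s$). ($f_4$) $0<\mu F(x,s)\le sf(x,s)$ for $s\ne0$ with some $\mu>2$, $F(x,s)=\int_0^sf(x,t)dt$. ($f_5$) $t\mapsto t^{-1}sf(x,ts)$ increasing on $(0,\infty)$. For a potential $W$ satisfying (V$_1$), let $E^s_W=\{u\in L^2:\int|\xi|^{2s}|\hat u|^2d\xi+\int W|u|^2dx<\infty\}$, $J_W(u)=\frac12\int|\xi|^{2s}|\hat u|^2d\xi+\frac12\int W|u|^2dx-\int F(x,u)dx$, $\Gamma_W=\{g\in C([0,1],E^s_W):g(0)=0,\ J_W(g(1))<0\}$, and $c(W)=\inf_{g\in\Gamma_W}\max_{t\in[0,1]}J_W(g(t))$ (the mountain-pass level associated with $W$). *)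

theory Defs
  imports "HOL-Analysis.Analysis"
begin

definition L2r :: "('a::euclidean_space \<Rightarrow> real) set" where
  "L2r = {u. u \<in> borel_measurable lebesgue \<and> integrable lebesgue (\<lambda>x. (u x)^2)}"

definition fourier_L1 :: "('a::euclidean_space \<Rightarrow> complex) \<Rightarrow> 'a \<Rightarrow> complex" where
  "fourier_L1 \<phi> \<xi> = (LINT x|lebesgue. exp (- (2 * of_real pi * \<i> * of_real (x \<bullet> \<xi>))) * \<phi> x)"

text \<open>g is the (Plancherel) Fourier transform of the L^2 function u, characterised by
  duality against all L^1 \<inter> L^2 test functions.\<close>
definition is_fourier_L2 :: "('a::euclidean_space \<Rightarrow> real) \<Rightarrow> ('a \<Rightarrow> complex) \<Rightarrow> bool" where
  "is_fourier_L2 u g \<longleftrightarrow>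
     g \<in> borel_measurable lebesgue \<and> integrable lebesgue (\<lambda>\<xi>. (cmod (g \<xi>))^2) \<and>
     (\<forall>\<phi>. \<phi> \<in> borel_measurable lebesgue \<and> integrable lebesgue \<phi> \<and>
          integrable lebesgue (\<lambda>x. (cmod (\<phi> x))^2) \<longrightarrow>
          (LINT \<xi>|lebesgue. g \<xi> * \<phi> \<xi>) = (LINT x|lebesgue. of_real (u x) * fourier_L1 \<phi> x))"

definition fourier_L2 :: "('a::euclidean_space \<Rightarrow> real) \<Rightarrow> 'a \<Rightarrow> complex" where
  "fourier_L2 u = (SOME g. is_fourier_L2 u g)"

definition frac_energy :: "real \<Rightarrow> ('a::euclidean_space \<Rightarrow> real) \<Rightarrow> ennreal" where
  "frac_energy s u = (\<integral>\<^sup>+ \<xi>. ennreal (norm \<xi> powr (2 * s) * (cmod (fourier_L2 u \<xi>))^2) \<partial>lebesgue)"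

definition pot_energy :: "('a::euclidean_space \<Rightarrow> real) \<Rightarrow> ('a \<Rightarrow> real) \<Rightarrow> ennreal" where
  "pot_energy W u = (\<integral>\<^sup>+ x. ennreal (W x * (u x)^2) \<partial>lebesgue)"

definition E_space :: "real \<Rightarrow> ('a::euclidean_space \<Rightarrow> real) \<Rightarrow> ('a \<Rightarrow> real) set" where
  "E_space s W = {u \<in> L2r. frac_energy s u < \<infinity> \<and> pot_energy W u < \<infinity>}"

definition E_norm :: "real \<Rightarrow> ('a::euclidean_space \<Rightarrow> real) \<Rightarrow> ('a \<Rightarrow> real) \<Rightarrow> real" where
  "E_norm s W u = sqrt (enn2real (frac_energy s u) + enn2real (pot_energy W u))"

definition F_prim :: "('a \<Rightarrow> real \<Rightarrow> real) \<Rightarrow> 'a \<Rightarrow> real \<Rightarrow> real" where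
  "F_prim f x t = (LBINT \<tau>=ereal 0..ereal t. f x \<tau>)"

definition J_fun :: "real \<Rightarrow> ('a::euclidean_space \<Rightarrow> real) \<Rightarrow> ('a \<Rightarrow> real \<Rightarrow> real) \<Rightarrow> ('a \<Rightarrow> real) \<Rightarrow> real" where
  "J_fun s W f u = 1/2 * enn2real (frac_energy s u) + 1/2 * enn2real (pot_energy W u)
      - (LINT x|lebesgue. F_prim f x (u x))"

definition Gamma_paths :: "real \<Rightarrow> ('a::euclidean_space \<Rightarrow> real) \<Rightarrow> ('a \<Rightarrow> real \<Rightarrow> real) \<Rightarrow> (real \<Rightarrow> 'a \<Rightarrow> real) set" where
  "Gamma_paths s W f = {g.
     (\<forall>t\<in>{0..1}. g t \<in> E_space s W) \<and>
     (\<forall>t\<in>{0..1}. \<forall>e>0. \<exists>d>0. \<forall>t'\<in>{0..1}. \<bar>t' - t\<bar> < d \<longrightarrow> E_norm s W (\<lambda>x. g t' x - g t x) < e) \<and>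
     (AE x in lebesgue. g 0 x = 0) \<and>
     J_fun s W f (g 1) < 0}"

definition c_level :: "real \<Rightarrow> ('a::euclidean_space \<Rightarrow> real) \<Rightarrow> ('a \<Rightarrow> real \<Rightarrow> real) \<Rightarrow> ereal" where
  "c_level s W f = (INF g\<in>Gamma_paths s W f. SUP t\<in>{0..1}. ereal (J_fun s W f (g t)))"

definition C1_fun :: "('b::real_normed_vector \<Rightarrow> real) \<Rightarrow> bool" where
  "C1_fun h \<longleftrightarrow> (\<exists>D. (\<forall>x. (h has_derivative blinfun_apply (D x)) (at x)) \<and> continuous_on UNIV D)"

definition V1_cond :: "('a::euclidean_space \<Rightarrow> real) \<Rightarrow> bool" where
  "V1_cond W \<longleftrightarrow> C1_fun W \<and> (\<exists>c>0. \<forall>x. c \<le> W x)"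

end

theory Submission imports Defs begin

text \<open>Lowering the potential can only enlarge the space \<open>E\<^sup>s\<close>, lower the functional \<open>J\<close>
  and weaken the norm, so every admissible path for \<open>V\<close> is admissible for \<open>Vt\<close> with a
  pointwise smaller energy; taking max over the path and inf over the paths gives the claim.\<close>

lemma C1_fun_continuous: "C1_fun h \<Longrightarrow> continuous_on UNIV h"
  unfolding C1_fun_def
  by (meson continuous_at_imp_continuous_on has_derivative_continuous)

lemma V1_cond_measurable: "V1_cond V \<Longrightarrow> V \<in> borel_measurable lebesgue"
  unfolding V1_cond_def
  by (auto dest!: C1_fun_continuous intro!: measurable_completion borel_measurable_continuous_onI)

lemma V1_cond_nonneg: "V1_cond V \<Longrightarrow> 0 \<le> V x"
  unfolding V1_cond_def by (meson less_le_trans less_imp_le)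

lemma pot_energy_mono: "(\<And>x. W x \<le> V x) \<Longrightarrow> pot_energy W u \<le> pot_energy V u"
  unfolding pot_energy_def by (intro nn_integral_mono) (simp add: ennreal_leI mult_right_mono)

lemma pot_energy_diff_finite:
  assumes V_nonneg: "\<And>x. 0 \<le> V x" and V_meas: "V \<in> borel_measurable lebesgue"
    and meas: "a \<in> borel_measurable lebesgue" "b \<in> borel_measurable lebesgue"
    and fin: "pot_energy V a < \<infinity>" "pot_energy V b < \<infinity>"
  shows "pot_energy V (\<lambda>x. a x - b x) < \<infinity>"
proof -
  have pointwise: "ennreal (V x * (a x - b x)^2)
      \<le> ennreal (2 * (V x * (a x)^2)) + ennreal (2 * (V x * (b x)^2))" for x
  proof -
    have "(a x - b x)^2 \<le> 2 * (a x)^2 + 2 * (b x)^2"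
      using zero_le_power2[of "a x + b x"] by (simp add: power2_eq_square algebra_simps)
    then have "V x * (a x - b x)^2 \<le> V x * (2 * (a x)^2 + 2 * (b x)^2)"
      using V_nonneg by (rule mult_left_mono)
    then have "V x * (a x - b x)^2 \<le> 2 * (V x * (a x)^2) + 2 * (V x * (b x)^2)"
      by (simp add: distrib_left mult.left_commute)
    then show ?thesis
      using V_nonneg[of x] by (metis ennreal_leI ennreal_plus mult_nonneg_nonneg zero_le_numeral zero_le_power2)
  qed
  have "pot_energy V (\<lambda>x. a x - b x)
      \<le> (\<integral>\<^sup>+x. ennreal (2 * (V x * (a x)^2)) + ennreal (2 * (V x * (b x)^2)) \<partial>lebesgue)"
    unfolding pot_energy_def using pointwise by (rule nn_integral_mono)
  also have "\<dots> = 2 * pot_energy V a + 2 * pot_energy V b"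
    unfolding pot_energy_def using V_nonneg meas V_meas
    by (subst nn_integral_add) (auto simp: ennreal_mult nn_integral_cmult)
  also have "\<dots> < \<infinity>"
    using fin by (simp add: ennreal_mult_less_top)
  finally show ?thesis .
qed

lemma E_space_antimono:
  assumes "\<And>x. W x \<le> V x" shows "E_space s V \<subseteq> E_space s W"
  using pot_energy_mono[of W V, OF assms] by (auto simp: E_space_def intro: le_less_trans)

lemma enn2real_pot_energy_mono:
  "(\<And>x. W x \<le> V x) \<Longrightarrow> pot_energy V u < \<infinity>
     \<Longrightarrow> enn2real (pot_energy W u) \<le> enn2real (pot_energy V u)"
  by (simp add: enn2real_mono pot_energy_mono)

lemma J_fun_mono:
  "(\<And>x. W x \<le> V x) \<Longrightarrow> pot_energy V u < \<infinity> \<Longrightarrow> J_fun s W f u \<le> J_fun s V f u"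
  unfolding J_fun_def by (drule (1) enn2real_pot_energy_mono) simp

lemma E_norm_mono:
  "(\<And>x. W x \<le> V x) \<Longrightarrow> pot_energy V u < \<infinity> \<Longrightarrow> E_norm s W u \<le> E_norm s V u"
  unfolding E_norm_def by (drule (1) enn2real_pot_energy_mono) simp

lemma Gamma_paths_antimono:
  assumes V_nonneg: "\<And>x. 0 \<le> V x" and V_meas: "V \<in> borel_measurable lebesgue"
    and le: "\<And>x. W x \<le> V x"
  shows "Gamma_paths s V f \<subseteq> Gamma_paths s W f"
proof
  fix g assume g: "g \<in> Gamma_paths s V f"
  then have gE: "g t \<in> E_space s V" if "t \<in> {0..1}" for t
    using that by (simp add: Gamma_paths_def)
  \<comment> \<open>\<open>enn2real \<infinity> = 0\<close>: the norms compare only because the difference has finite \<open>V\<close>-energy.\<close>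
  have norm_le: "E_norm s W (\<lambda>x. g t' x - g t x) \<le> E_norm s V (\<lambda>x. g t' x - g t x)"
    if "t \<in> {0..1}" "t' \<in> {0..1}" for t t'
    using gE[OF that(1)] gE[OF that(2)]
    by (intro E_norm_mono le pot_energy_diff_finite[OF V_nonneg V_meas])
       (auto simp: E_space_def L2r_def)
  have "\<forall>t\<in>{0..1}. \<forall>e>0. \<exists>d>0. \<forall>t'\<in>{0..1}. \<bar>t' - t\<bar> < d \<longrightarrow> E_norm s W (\<lambda>x. g t' x - g t x) < e"
  proof (intro ballI allI impI)
    fix t e :: real assume t: "t \<in> {0..1}" and "0 < e"
    then obtain d where "d > 0"
      and d: "\<forall>t'\<in>{0..1}. \<bar>t' - t\<bar> < d \<longrightarrow> E_norm s V (\<lambda>x. g t' x - g t x) < e"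
      using g unfolding Gamma_paths_def by blast
    then show "\<exists>d>0. \<forall>t'\<in>{0..1}. \<bar>t' - t\<bar> < d \<longrightarrow> E_norm s W (\<lambda>x. g t' x - g t x) < e"
      using norm_le[OF t] by (meson le_less_trans)
  qed
  moreover have "J_fun s W f (g 1) < 0"
  proof -
    have "J_fun s W f (g 1) \<le> J_fun s V f (g 1)"
      using gE[of 1] by (intro J_fun_mono le) (simp add: E_space_def)
    moreover have "J_fun s V f (g 1) < 0"
      using g by (simp add: Gamma_paths_def)
    ultimately show ?thesis by linarith
  qed
  moreover have "\<forall>t\<in>{0..1}. g t \<in> E_space s W"
    using gE E_space_antimono[of W V s] le by blast
  moreover have "AE x in lebesgue. g 0 x = 0"
    using g by (simp add: Gamma_paths_def)
  ultimately show "g \<in> Gamma_paths s W f"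
    unfolding Gamma_paths_def by (intro CollectI conjI)
qed

lemma c_level_mono:
  assumes V_nonneg: "\<And>x. 0 \<le> V x" and V_meas: "V \<in> borel_measurable lebesgue"
    and le: "\<And>x. W x \<le> V x"
  shows "c_level s W f \<le> c_level s V f"
  unfolding c_level_def
proof (rule INF_mono)
  fix g assume g: "g \<in> Gamma_paths s V f"
  have "J_fun s W f (g t) \<le> J_fun s V f (g t)" if "t \<in> {0..1}" for t
    using g that by (intro J_fun_mono le) (simp add: Gamma_paths_def E_space_def)
  then have "(SUP t\<in>{0..1}. ereal (J_fun s W f (g t))) \<le> (SUP t\<in>{0..1}. ereal (J_fun s V f (g t)))"
    by (intro SUP_subset_mono) auto
  then show "\<exists>h\<in>Gamma_paths s W f.
      (SUP t\<in>{0..1}. ereal (J_fun s W f (h t))) \<le> (SUP t\<in>{0..1}. ereal (J_fun s V f (g t)))"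
    using Gamma_paths_antimono[OF V_nonneg V_meas le] g by blast
qed

theorem proposition4p3:
  fixes V Vt :: "'a::euclidean_space \<Rightarrow> real"
    and f :: "'a \<Rightarrow> real \<Rightarrow> real"
    and s p \<mu> a1 a2 :: real
  assumes s_pos: "0 < s" and s_lt1: "s < 1"
    and V1: "V1_cond V" and Vt1: "V1_cond Vt"
    and f1: "C1_fun (\<lambda>(x, t). f x t)"
    and f2: "\<forall>x. f x 0 = 0 \<and> deriv (f x) 0 = 0"
    and f3_dim: "2 * s < real DIM('a)"
    and f3_p: "1 < p" "p < (real DIM('a) + 2 * s) / (real DIM('a) - 2 * s)"
    and f3_a: "0 < a1" "0 < a2"
    and f3: "\<forall>x t. \<bar>deriv (f x) t\<bar> \<le> a1 + a2 * \<bar>t\<bar> powr (p - 1)"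
    and f4_mu: "2 < \<mu>"
    and f4: "\<forall>x t. t \<noteq> 0 \<longrightarrow> 0 < \<mu> * F_prim f x t \<and> \<mu> * F_prim f x t \<le> t * f x t"
    and f5: "\<forall>x \<sigma>. \<sigma> \<noteq> 0 \<longrightarrow> strict_mono_on {0<..} (\<lambda>\<tau>. \<sigma> * f x (\<tau> * \<sigma>) / \<tau>)"
    and Vge: "\<forall>x. Vt x \<le> V x"
  shows "c_level s Vt f \<le> c_level s V f"
  by (rule c_level_mono[OF V1_cond_nonneg[OF V1] V1_cond_measurable[OF V1]]) (use Vge in blast)

end
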